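(* Let $\mathfrak{R}$ be an alternative ring with a nontrivial idempotent $e_1$, with Peirce decomposition $\mathfrak{R}=\mathfrak{R}_{11}\oplus\mathfrak{R}_{12}\oplus\mathfrak{R}_{21}\oplus\mathfrak{R}_{22}$ relative to $e_1$, and let $\mathcal{D}\colon\mathfrak{R}\to\mathfrak{R}$ be a multiplicative Lie-type derivation of $\mathfrak{R}$. Suppose that $\mathfrak{R}$ satisfies: (i) if $a_{11}\in\mathfrak{R}_{11}$, $a_{22}\in\mathfrak{R}_{22}$ and $[a_{11}+a_{22},x]=0$ for all $x\in\mathfrak{R}_{12}$, then $a_{11}+a_{22}\in\mathcal{Z}(\mathfrak{R})$; (ii) if $a_{11}\in\mathfrak{R}_{11}$, $a_{22}\in\mathfrak{R}_{22}$ and $[a_{11}+a_{22},x]=0$ for all $x\in\mathfrak{R}_{21}$, then $a_{11}+a_{22}\in\mathcal{Z}(\mathfrak{R})$. Then $\mathcal{D}$ is almost additive, i.e. $\mathcal{D}(a+b)-\mathcal{D}(a)-\mathcal{D}(b)\in\mathcal{Z}(\mathfrak{R})$ for all $a,b\in\mathfrak{R}$.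
   Context: Rings are not assumed associative or unital. The associator is $(x,y,z)=(xy)z-x(yz)$; $\mathfrak{R}$ is alternative if $(x,x,y)=0=(y,x,x)$ for all $x,y$. $[x,y]=xy-yx$ and $\mathcal{Z}(\mathfrak{R})=\{r\in\mathfrak{R}: [r,x]=0 \text{ for all } x\in\mathfrak{R}\}$ is the commutative center. Define $p_1(x)=x$ and $p_n(x_1,\dots,x_n)=[p_{n-1}(x_1,\dots,x_{n-1}),x_n]$ for $n\ge 2$. For an integer $n\ge2$, a map $\mathcal{D}\colon\mathfrak{R}\to\mathfrak{R}$ (not necessarily additive) is a multiplicative Lie $n$-derivation if $\mathcal{D}(p_n(x_1,\dots,x_n))=\sum_{i=1}^n p_n(x_1,\dots,x_{i-1},\mathcal{D}(x_i),x_{i+1},\dots,x_n)$ for all $x_1,\dots,x_n\in\mathfrak{R}$; a multiplicative Lie-type derivation is a multiplicative Lie $n$-derivation for some $n\ge 2$. A nontrivial idempotent is an element $e_1\neq0$ with $e_1^2=e_1$ which is not a multiplicative identity of $\mathfrak{R}$. Writing $e_2a:=a-e_1a$ and $ae_2:=a-ae_1$, one has $(e_ia)e_j=e_i(ae_j)$, and $\mathfrak{R}_{ij}=e_i\mathfrak{R}e_j$ ($i,j=1,2$) gives the Peirce decomposition $\mathfrak{R}=\mathfrak{R}_{11}\oplus\mathfrak{R}_{12}\oplus\mathfrak{R}_{21}\oplus\mathfrak{R}_{22}$. *)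

theory Defs
  imports Main
begin

class alt_ring = ab_group_add + times +
  assumes distrib_left_nar: "x * (y + z) = x * y + x * z"
    and distrib_right_nar: "(x + y) * z = x * z + y * z"
    and left_alternative: "(x * x) * y - x * (x * y) = 0"
    and right_alternative: "(y * x) * x - y * (x * x) = 0"

definition associator :: "'a::alt_ring \<Rightarrow> 'a \<Rightarrow> 'a \<Rightarrow> 'a" where
  "associator x y z = (x * y) * z - x * (y * z)"

definition commutator :: "'a::alt_ring \<Rightarrow> 'a \<Rightarrow> 'a" where
  "commutator x y = x * y - y * x"

definition comm_center :: "'a::alt_ring set" where
  "comm_center = {r. \<forall>x. commutator r x = 0}"

text \<open>p_n(x_1,...,x_n) for the list [x_1,...,x_n]: p_1(x)=x,
  p_n(x_1..x_n) = [p_{n-1}(x_1..x_{n-1}), x_n].\<close>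
fun lie_poly :: "'a::alt_ring list \<Rightarrow> 'a" where
  "lie_poly [] = 0"
| "lie_poly (x # xs) = foldl commutator x xs"

definition mult_lie_n_derivation :: "nat \<Rightarrow> ('a::alt_ring \<Rightarrow> 'a) \<Rightarrow> bool" where
  "mult_lie_n_derivation n D \<longleftrightarrow>
     (\<forall>xs. length xs = n \<longrightarrow>
        D (lie_poly xs) = (\<Sum>i<n. lie_poly (xs[i := D (xs ! i)])))"

definition mult_lie_type_derivation :: "('a::alt_ring \<Rightarrow> 'a) \<Rightarrow> bool" where
  "mult_lie_type_derivation D \<longleftrightarrow> (\<exists>n\<ge>2. mult_lie_n_derivation n D)"

definition nontrivial_idempotent :: "'a::alt_ring \<Rightarrow> bool" where
  "nontrivial_idempotent e \<longleftrightarrow> e \<noteq> 0 \<and> e * e = e \<and>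
     \<not> (\<forall>x. e * x = x \<and> x * e = x)"

text \<open>Peirce components relative to e1 (with e2 a := a - e1 a, a e2 := a - a e1).\<close>
definition peirce11 :: "'a::alt_ring \<Rightarrow> 'a set" where
  "peirce11 e = {(e * a) * e | a. True}"
definition peirce12 :: "'a::alt_ring \<Rightarrow> 'a set" where
  "peirce12 e = {(e * a) - (e * a) * e | a. True}"
definition peirce21 :: "'a::alt_ring \<Rightarrow> 'a set" where
  "peirce21 e = {(a - e * a) * e | a. True}"
definition peirce22 :: "'a::alt_ring \<Rightarrow> 'a set" where
  "peirce22 e = {(a - e * a) - (a - e * a) * e | a. True}"

end

theory Submission
  imports Defs
begin

text \<open>Write \<open>D (a + b) = D a + D b + \<delta>(a, b)\<close> and fill all slots of \<open>p\<^sub>n\<close> but the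
  first two with the idempotent: \<open>q(x, y) = p\<^sub>n(x, y, e, \<dots>, e)\<close> is biadditive, and bracketing
  with \<open>e\<close> acts on the Peirce components as \<open>0\<close> on \<open>R\<^sub>1\<^sub>1 + R\<^sub>2\<^sub>2\<close>, \<open>-1\<close> on \<open>R\<^sub>1\<^sub>2\<close>
  and \<open>1\<close> on \<open>R\<^sub>2\<^sub>1\<close>.  Applying the Lie \<open>n\<close>-derivation identity to \<open>q\<close> with a sum in one
  slot gives \<open>q(\<delta>(a, b), y) = \<delta>(q(a, y), q(b, y))\<close>, and symmetrically.  Since \<open>q(-, e)\<close>
  vanishes exactly on diagonal elements, \<open>\<delta>(a, b)\<close> is diagonal for diagonal \<open>a\<close>, and the
  hypotheses (i), (ii) make a diagonal element central once \<open>q(w, -)\<close> kills it for all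
  \<open>w\<close> in \<open>R\<^sub>1\<^sub>2\<close> or all \<open>w\<close> in \<open>R\<^sub>2\<^sub>1\<close>.  From this, \<open>\<delta>\<close> is central when one argument is
  diagonal and the other off-diagonal; expressing \<open>u + v = q(e + v, \<pm>u + e)\<close> shows
  \<open>\<delta>(u, v) = 0\<close> for \<open>u \<in> R\<^sub>1\<^sub>2\<close>, \<open>v \<in> R\<^sub>2\<^sub>1\<close>; similar expressions give \<open>\<delta> = 0\<close> on
  \<open>R\<^sub>1\<^sub>2 \<times> R\<^sub>1\<^sub>2\<close> and \<open>R\<^sub>2\<^sub>1 \<times> R\<^sub>2\<^sub>1\<close>, hence \<open>\<delta>\<close> is central on pairs of diagonal elements,
  and decomposing arbitrary \<open>a, b\<close> into Peirce components finishes the proof.\<close>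

section \<open>Alternative rings\<close>

subclass (in alt_ring) mult_zero
proof
  fix a :: 'a
  have "0 * a + 0 * a = 0 * a"
    using distrib_right_nar[of 0 0 a] by simp
  then show "0 * a = 0" by simp
  have "a * 0 + a * 0 = a * 0"
    using distrib_left_nar[of a 0 0] by simp
  then show "a * 0 = 0" by simp
qed

context alt_ring
begin

lemma minus_mult_left_nar [simp]: "(- x) * y = - (x * y)"
  using distrib_right_nar[of "- x" x y] by (simp add: eq_neg_iff_add_eq_0)

lemma minus_mult_right_nar [simp]: "x * (- y) = - (x * y)"
  using distrib_left_nar[of x "- y" y] by (simp add: eq_neg_iff_add_eq_0)

lemma left_diff_distrib_nar: "(x - y) * z = x * z - y * z"
  using distrib_right_nar[of x "- y" z] by simp

lemma right_diff_distrib_nar: "x * (y - z) = x * y - x * z"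
  using distrib_left_nar[of x y "- z"] by simp

lemmas distribs_nar =
  distrib_left_nar distrib_right_nar left_diff_distrib_nar right_diff_distrib_nar

end

lemma associator_swap_left: "associator (a::'a::alt_ring) b c = - associator b a c"
proof -
  have "(a * a) * c = a * (a * c)" "(b * b) * c = b * (b * c)"
    using left_alternative[of a c] left_alternative[of b c] by simp_all
  with left_alternative[of "a + b" c] show ?thesis
    unfolding associator_def by (simp add: distribs_nar algebra_simps)
qed

lemma associator_swap_right: "associator (a::'a::alt_ring) b c = - associator a c b"
proof -
  have "(a * b) * b = a * (b * b)" "(a * c) * c = a * (c * c)"
    using right_alternative[of a b] right_alternative[of a c] by simp_all
  with right_alternative[of a "b + c"] show ?thesis
    unfolding associator_def by (simp add: distribs_nar algebra_simps)
qed

lemma flexible: "((x::'a::alt_ring) * y) * x = x * (y * x)"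
  using associator_swap_right[of x y x] left_alternative[of x y]
  by (simp add: associator_def)

lemma teichmuller_identity:
  "associator ((w::'a::alt_ring) * x) y z - associator w (x * y) z + associator w x (y * z)
     = w * associator x y z + associator w x y * z"
  unfolding associator_def by (simp add: distribs_nar algebra_simps)

lemma moufang_left: "(((x::'a::alt_ring) * a) * x) * y = x * (a * (x * y))"
proof -
  have xx: "associator x (x * b) c = associator (x * x) b c - x * associator x b c" for b c
    using teichmuller_identity[of x x b c] left_alternative[of x "b * c"] left_alternative[of x b]
    by (simp add: associator_def[of x x] algebra_simps)
  have "((x * a) * x) * y - x * (a * (x * y)) = associator (x * a) x y + associator x a (x * y)"
    by (simp add: associator_def)
  also have "\<dots> = - associator x (x * a) y - associator x (x * y) a"
    using associator_swap_left[of "x * a" x y] associator_swap_right[of x a "x * y"] by simp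
  also have "\<dots> = 0"
    unfolding xx using associator_swap_right[of "x * x" a y] associator_swap_right[of x a y]
    by (simp add: algebra_simps)
  finally show ?thesis by simp
qed

lemma moufang_right: "y * (((x::'a::alt_ring) * a) * x) = ((y * x) * a) * x"
proof -
  have xx: "associator b (c * x) x = associator b c (x * x) - associator b c x * x" for b c
    using teichmuller_identity[of b c x x] right_alternative[of "b * c" x] right_alternative[of c x]
    by (simp add: associator_def[of _ x x] algebra_simps)
  have "((y * x) * a) * x - y * ((x * a) * x) = associator (y * x) a x + associator y x (a * x)"
    by (simp add: flexible associator_def)
  also have "\<dots> = - associator a (y * x) x - associator y (a * x) x"
    using associator_swap_left[of "y * x" a x] associator_swap_right[of y x "a * x"] by simp
  also have "\<dots> = 0"
    unfolding xx using associator_swap_left[of a y "x * x"] associator_swap_left[of a y x]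
    by (simp add: algebra_simps)
  finally show ?thesis by simp
qed

lemma commutator_add_left: "commutator ((a::'a::alt_ring) + b) c = commutator a c + commutator b c"
  unfolding commutator_def by (simp add: distribs_nar)

lemma commutator_add_right: "commutator (c::'a::alt_ring) (a + b) = commutator c a + commutator c b"
  unfolding commutator_def by (simp add: distribs_nar)

lemma commutator_minus_left: "commutator (- (a::'a::alt_ring)) c = - commutator a c"
  unfolding commutator_def by simp

lemma commutator_zero [simp]:
  "commutator (0::'a::alt_ring) c = 0" "commutator c (0::'a::alt_ring) = 0"
  unfolding commutator_def by simp_all

lemma comm_center_add: "a \<in> comm_center \<Longrightarrow> b \<in> comm_center \<Longrightarrow> a + b \<in> comm_center"
  unfolding comm_center_def by (simp add: commutator_add_left)

lemma comm_center_diff: "a \<in> comm_center \<Longrightarrow> b \<in> comm_center \<Longrightarrow> a - b \<in> comm_center"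
  unfolding comm_center_def commutator_def by (simp add: left_diff_distrib_nar right_diff_distrib_nar)

section \<open>Multiplicative Lie \<open>n\<close>-derivations\<close>

lemma foldl_commutator_add:
  "foldl commutator ((a::'a::alt_ring) + b) ys = foldl commutator a ys + foldl commutator b ys"
  by (induct ys arbitrary: a b) (simp_all add: commutator_add_left)

lemma foldl_commutator_minus: "foldl commutator (- (a::'a::alt_ring)) ys = - foldl commutator a ys"
  by (induct ys arbitrary: a) (simp_all add: commutator_minus_left)

lemma foldl_commutator_zero [simp]: "foldl commutator (0::'a::alt_ring) ys = 0"
  by (induct ys) simp_all

lemma lie_poly_snoc: "xs \<noteq> [] \<Longrightarrow> lie_poly (xs @ [y]) = commutator (lie_poly xs) y"
  by (cases xs) simp_all

lemma lie_poly_update_add: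
  assumes "j < length xs"
  shows "lie_poly (xs[j := (a::'a::alt_ring) + b]) = lie_poly (xs[j := a]) + lie_poly (xs[j := b])"
  using assms
proof (induction xs arbitrary: j rule: rev_induct)
  case Nil
  then show ?case by simp
next
  case (snoc y xs)
  show ?case
  proof (cases "j < length xs")
    case True
    then have "xs \<noteq> []" and "(xs @ [y])[j := c] = xs[j := c] @ [y]" for c
      by (auto simp: list_update_append)
    with True snoc.IH show ?thesis
      by (simp add: lie_poly_snoc commutator_add_left)
  next
    case False
    with snoc.prems have "j = length xs"
      by simp
    then have "(xs @ [y])[j := c] = xs @ [c]" for c
      by simp
    then show ?thesis
      by (cases "xs = []") (simp_all add: lie_poly_snoc commutator_add_right)
  qed
qed

lemma mult_lie_n_derivation_update_add:
  fixes D :: "'a::alt_ring \<Rightarrow> 'a"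
  assumes der: "mult_lie_n_derivation n D" and len: "length xs = n" and j: "j < n"
  shows "D (lie_poly (xs[j := a + b])) = D (lie_poly (xs[j := a])) + D (lie_poly (xs[j := b]))
           + lie_poly (xs[j := D (a + b) - D a - D b])"
proof -
  define f where "f c i = lie_poly ((xs[j := c])[i := D ((xs[j := c]) ! i)])" for c i
  have D_eq: "D (lie_poly (xs[j := c])) = (\<Sum>i<n. f c i)" for c
    using der len unfolding mult_lie_n_derivation_def f_def by simp
  have f_add: "f (a + b) i = f a i + f b i
      + (if i = j then lie_poly (xs[j := D (a + b) - D a - D b]) else 0)" if "i < n" for i
  proof (cases "i = j")
    case True
    show ?thesis
      using True j len lie_poly_update_add[of j xs "D a + D b" "D (a + b) - D a - D b"]
        lie_poly_update_add[of j xs "D a" "D b"]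
      by (simp add: f_def)
  next
    case False
    then have "f c i = lie_poly ((xs[i := D (xs ! i)])[j := c])" for c
      unfolding f_def by (simp add: list_update_swap)
    with False j len show ?thesis
      using lie_poly_update_add[of j "xs[i := D (xs ! i)]"] by simp
  qed
  have "(\<Sum>i<n. f (a + b) i)
      = (\<Sum>i<n. f a i) + (\<Sum>i<n. f b i) + lie_poly (xs[j := D (a + b) - D a - D b])"
    using j by (simp add: f_add sum.distrib)
  then show ?thesis
    by (simp add: D_eq)
qed

lemma mult_lie_2_derivation_imp_3:
  fixes D :: "'a::alt_ring \<Rightarrow> 'a"
  assumes "mult_lie_n_derivation 2 D"
  shows "mult_lie_n_derivation 3 D"
  unfolding mult_lie_n_derivation_def
proof (intro allI impI)
  have D_comm: "D (commutator x y) = commutator (D x) y + commutator x (D y)" for x y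
    using assms unfolding mult_lie_n_derivation_def
    by (auto simp: numeral_2_eq_2 dest: spec[of _ "[x, y]"])
  fix xs :: "'a list"
  assume "length xs = 3"
  then obtain x y z where "xs = [x, y, z]"
    by (auto simp: numeral_3_eq_3 length_Suc_conv)
  then show "D (lie_poly xs) = (\<Sum>i<3. lie_poly (xs[i := D (xs ! i)]))"
    by (simp add: numeral_3_eq_3 D_comm commutator_add_left)
qed

lemma mult_lie_type_derivation_ge_3E:
  assumes "mult_lie_type_derivation D"
  obtains n where "3 \<le> n" and "mult_lie_n_derivation n (D :: 'a::alt_ring \<Rightarrow> 'a)"
proof -
  obtain n where "2 \<le> n" and der: "mult_lie_n_derivation n D"
    using assms unfolding mult_lie_type_derivation_def by blast
  show ?thesis
  proof (cases "n = 2")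
    case True
    with der show ?thesis
      by (intro that[of 3]) (simp_all add: mult_lie_2_derivation_imp_3)
  next
    case False
    with \<open>2 \<le> n\<close> der show ?thesis
      by (intro that[of n]) simp_all
  qed
qed

section \<open>Peirce decomposition\<close>

lemma idempotent_map_double_eq_zero:
  fixes f :: "'a::ab_group_add \<Rightarrow> 'a"
  assumes "f (f z) = f z" and "f (z + z) = f z + f z" and "f z = z + z"
  shows "f z = 0"
proof -
  from assms have "z + z = (z + z) + (z + z)"
    by metis
  with assms(3) show ?thesis
    by simp
qed

lemma idempotent_map_neg_eq_id:
  fixes f :: "'a::ab_group_add \<Rightarrow> 'a"
  assumes "f (f z) = f z" and "f (- z) = - f z" and "f z = - z"
  shows "f z = z"
  using assms by (metis minus_minus)

locale idempotent =
  fixes e :: "'a::alt_ring"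
  assumes idem: "e * e = e"
begin

lemma idem_mult_idem_mult: "e * (e * z) = e * z"
  using left_alternative[of e z] by (simp add: idem)

lemma mult_idem_mult_idem: "(z * e) * e = z * e"
  using right_alternative[of z e] by (simp add: idem)

text \<open>The Peirce index 1 is encoded as \<^term>\<open>True\<close> and 2 as \<^term>\<open>False\<close>, so that the
  multiplication rule of alternative rings becomes
  \<open>R\<^sub>i\<^sub>j R\<^sub>k\<^sub>l \<subseteq> R\<^bsub>i\<oplus>j\<oplus>k, j\<oplus>k\<oplus>l\<^esub>\<close> with \<open>\<oplus>\<close> the exclusive or (\<^term>\<open>(\<noteq>)\<close>).\<close>

definition peirce_space :: "bool \<Rightarrow> bool \<Rightarrow> 'a \<Rightarrow> bool" where
  "peirce_space i j x \<longleftrightarrow> e * x = (if i then x else 0) \<and> x * e = (if j then x else 0)"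

lemma peirce_space_mult:
  assumes x: "peirce_space i j x" and y: "peirce_space k l y"
  shows "peirce_space (i \<noteq> (j \<noteq> k)) (j \<noteq> (k \<noteq> l)) (x * y)"
proof -
  have ex: "e * x = (if i then x else 0)" and xe: "x * e = (if j then x else 0)"
    and ey: "e * y = (if k then y else 0)" and ye: "y * e = (if l then y else 0)"
    using x y unfolding peirce_space_def by auto
  txt \<open>The alternating laws give \<open>e (x y) = (i + j - k) x y\<close>; as \<open>z \<mapsto> e z\<close> is idempotent,
    the coefficients \<open>2\<close> and \<open>-1\<close> collapse to \<open>0\<close> and \<open>1\<close>.\<close>
  have left: "e * (x * y) = (if i then x * y else 0) + (if j then x * y else 0) - (if k then x * y else 0)"
    using associator_swap_left[of e x y] unfolding associator_def ex xe ey
    by (cases i; cases j; cases k) (simp_all add: algebra_simps minus_equation_iff)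
  have right: "(x * y) * e = (if l then x * y else 0) + (if k then x * y else 0) - (if j then x * y else 0)"
    using associator_swap_right[of x e y] unfolding associator_def xe ey ye
    by (cases j; cases k; cases l) (simp_all add: algebra_simps minus_equation_iff equation_minus_iff)
  have "e * (x * y) = (if i \<noteq> (j \<noteq> k) then x * y else 0)"
    using idempotent_map_double_eq_zero[of "(*) e", OF idem_mult_idem_mult distrib_left_nar]
      idempotent_map_neg_eq_id[of "(*) e", OF idem_mult_idem_mult minus_mult_right_nar]
    by (cases i; cases j; cases k) (simp_all add: left)
  moreover have "(x * y) * e = (if j \<noteq> (k \<noteq> l) then x * y else 0)"
    using idempotent_map_double_eq_zero[of "\<lambda>z. z * e", OF mult_idem_mult_idem distrib_right_nar]
      idempotent_map_neg_eq_id[of "\<lambda>z. z * e", OF mult_idem_mult_idem minus_mult_left_nar]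
    by (cases j; cases k; cases l) (simp_all add: right)
  ultimately show ?thesis
    unfolding peirce_space_def by blast
qed

lemma peirce_space_add: "peirce_space i j x \<Longrightarrow> peirce_space i j y \<Longrightarrow> peirce_space i j (x + y)"
  unfolding peirce_space_def by (simp add: distrib_left_nar distrib_right_nar)

lemma peirce_space_minus: "peirce_space i j x \<Longrightarrow> peirce_space i j (- x)"
  unfolding peirce_space_def by simp

lemma peirce_space_diff: "peirce_space i j x \<Longrightarrow> peirce_space i j y \<Longrightarrow> peirce_space i j (x - y)"
  unfolding peirce_space_def by (simp add: left_diff_distrib_nar right_diff_distrib_nar)

lemma peirce_space_idem: "peirce_space True True e"
  unfolding peirce_space_def by (simp add: idem)

definition proj11 :: "'a \<Rightarrow> 'a" where "proj11 x = (e * x) * e"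
definition proj12 :: "'a \<Rightarrow> 'a" where "proj12 x = e * x - (e * x) * e"
definition proj21 :: "'a \<Rightarrow> 'a" where "proj21 x = x * e - (e * x) * e"
definition proj22 :: "'a \<Rightarrow> 'a" where "proj22 x = x - e * x - x * e + (e * x) * e"

lemmas proj_defs = proj11_def proj12_def proj21_def proj22_def

lemma peirce_space_proj:
  "peirce_space True True (proj11 x)" "peirce_space True False (proj12 x)"
  "peirce_space False True (proj21 x)" "peirce_space False False (proj22 x)"
  unfolding peirce_space_def proj_defs
  by (simp_all add: distribs_nar idem_mult_idem_mult mult_idem_mult_idem flexible)

lemma peirce_decomposition: "x = proj11 x + proj12 x + proj21 x + proj22 x"
  unfolding proj_defs by simp

lemma proj_add:
  "proj11 (x + y) = proj11 x + proj11 y" "proj12 (x + y) = proj12 x + proj12 y"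
  "proj21 (x + y) = proj21 x + proj21 y" "proj22 (x + y) = proj22 x + proj22 y"
  unfolding proj_defs by (simp_all add: distribs_nar)

lemma proj_diff:
  "proj11 (x - y) = proj11 x - proj11 y" "proj12 (x - y) = proj12 x - proj12 y"
  "proj21 (x - y) = proj21 x - proj21 y" "proj22 (x - y) = proj22 x - proj22 y"
  unfolding proj_defs by (simp_all add: distribs_nar)

lemma proj_zero [simp]: "proj11 0 = 0" "proj12 0 = 0" "proj21 0 = 0" "proj22 0 = 0"
  unfolding proj_defs by simp_all

lemma proj_peirce_space:
  assumes "peirce_space i j x"
  shows "proj11 x = (if i \<and> j then x else 0)" "proj12 x = (if i \<and> \<not> j then x else 0)"
    "proj21 x = (if \<not> i \<and> j then x else 0)" "proj22 x = (if \<not> i \<and> \<not> j then x else 0)"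
  using assms unfolding proj_defs peirce_space_def by (cases i; cases j; simp)+

lemma range_proj:
  "range proj11 = {x. peirce_space True True x}" "range proj12 = {x. peirce_space True False x}"
  "range proj21 = {x. peirce_space False True x}" "range proj22 = {x. peirce_space False False x}"
proof -
  have "range f = {x. P x}" if "\<And>x. P (f x)" and "\<And>x. P x \<Longrightarrow> f x = x"
    for f :: "'a \<Rightarrow> 'a" and P
    using that by (auto intro: range_eqI[OF sym])
  then show "range proj11 = {x. peirce_space True True x}" "range proj12 = {x. peirce_space True False x}"
    "range proj21 = {x. peirce_space False True x}" "range proj22 = {x. peirce_space False False x}"
    using peirce_space_proj proj_peirce_space by simp_all
qed

lemma peirce_sets:
  "peirce11 e = {x. peirce_space True True x}" "peirce12 e = {x. peirce_space True False x}"
  "peirce21 e = {x. peirce_space False True x}" "peirce22 e = {x. peirce_space False False x}"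
proof -
  have "(a - e * a) * e = proj21 a" "(a - e * a) - (a - e * a) * e = proj22 a" for a
    unfolding proj_defs by (simp_all add: left_diff_distrib_nar algebra_simps)
  then show "peirce11 e = {x. peirce_space True True x}" "peirce12 e = {x. peirce_space True False x}"
    "peirce21 e = {x. peirce_space False True x}" "peirce22 e = {x. peirce_space False False x}"
    unfolding range_proj[symmetric] peirce11_def peirce12_def peirce21_def peirce22_def
    by (auto simp: proj11_def proj12_def)
qed

lemma peirce11_mult_eq_zero: "peirce_space True True d \<Longrightarrow> e * y = 0 \<Longrightarrow> d * y = 0"
  using moufang_left[of e d y] unfolding peirce_space_def by simp

lemma mult_peirce11_eq_zero: "peirce_space True True d \<Longrightarrow> y * e = 0 \<Longrightarrow> y * d = 0"
  using moufang_right[of y e d] unfolding peirce_space_def by simp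

lemma peirce21_mult_peirce22:
  assumes y: "peirce_space False True y" and d: "peirce_space False False d"
  shows "y * d = 0"
proof -
  have "peirce_space True True (y * d)"
    using peirce_space_mult[OF y d] by simp
  moreover have "(y * d) * e = 0"
    using moufang_right[of y e d] y d unfolding peirce_space_def by simp
  ultimately show ?thesis
    unfolding peirce_space_def by simp
qed

lemma peirce22_mult_peirce12:
  assumes d: "peirce_space False False d" and y: "peirce_space True False y"
  shows "d * y = 0"
proof -
  have "peirce_space True True (d * y)"
    using peirce_space_mult[OF d y] by simp
  moreover have "e * (d * y) = 0"
    using moufang_left[of e d y] y d unfolding peirce_space_def by simp
  ultimately show ?thesis
    unfolding peirce_space_def by simp
qed

lemma commutator_idem_right: "commutator x e = proj21 x - proj12 x"
  unfolding commutator_def proj_defs by (simp add: algebra_simps)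

lemma commutator_idem_left: "commutator e x = proj12 x - proj21 x"
  unfolding commutator_def proj_defs by (simp add: algebra_simps)

lemma foldl_commutator_idem:
  assumes "peirce_space i j w"
  shows "foldl commutator w (replicate k e)
    = (if k = 0 then w else if i = j then 0 else if i \<and> odd k then - w else w)"
  using assms
proof (induction k arbitrary: w)
  case 0
  then show ?case by simp
next
  case (Suc k)
  have "commutator w e = (if i = j then 0 else if i then - w else w)"
    using Suc.prems unfolding peirce_space_def commutator_def by auto
  with Suc.IH[OF peirce_space_minus[OF Suc.prems]] Suc.IH[OF Suc.prems] show ?case
    by auto
qed

definition diagonal :: "'a \<Rightarrow> bool" where
  "diagonal x \<longleftrightarrow> proj12 x = 0 \<and> proj21 x = 0"

lemma diagonal_eq: "diagonal x \<Longrightarrow> x = proj11 x + proj22 x"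
  using peirce_decomposition[of x] by (simp add: diagonal_def)

lemma diagonal_add: "diagonal x \<Longrightarrow> diagonal y \<Longrightarrow> diagonal (x + y)"
  by (simp add: diagonal_def proj_add)

lemma diagonal_peirce_space: "peirce_space i i x \<Longrightarrow> diagonal x"
  using proj_peirce_space[of i i x] by (simp add: diagonal_def)

lemma diagonal_proj: "diagonal (proj11 x)" "diagonal (proj22 x)"
  by (rule diagonal_peirce_space, rule peirce_space_proj)+

lemma diagonal_idem: "diagonal e"
  using peirce_space_idem by (rule diagonal_peirce_space)

end

locale peirce_center = idempotent +
  assumes center_by_peirce12: "\<And>a11 a22. a11 \<in> peirce11 e \<Longrightarrow> a22 \<in> peirce22 e \<Longrightarrow>
      (\<forall>x\<in>peirce12 e. commutator (a11 + a22) x = 0) \<Longrightarrow> a11 + a22 \<in> comm_center"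
    and center_by_peirce21: "\<And>a11 a22. a11 \<in> peirce11 e \<Longrightarrow> a22 \<in> peirce22 e \<Longrightarrow>
      (\<forall>x\<in>peirce21 e. commutator (a11 + a22) x = 0) \<Longrightarrow> a11 + a22 \<in> comm_center"
begin

lemma diagonal_in_center_peirce12:
  assumes t: "diagonal t" and comm: "\<And>x. peirce_space True False x \<Longrightarrow> x * proj22 t = proj11 t * x"
  shows "t \<in> comm_center"
proof -
  have t1: "peirce_space True True (proj11 t)" and t2: "peirce_space False False (proj22 t)"
    by (simp_all add: peirce_space_proj)
  have "proj11 t + proj22 t \<in> comm_center"
  proof (rule center_by_peirce12)
    show "proj11 t \<in> peirce11 e" "proj22 t \<in> peirce22 e"
      using t1 t2 by (simp_all add: peirce_sets)
    show "\<forall>x\<in>peirce12 e. commutator (proj11 t + proj22 t) x = 0"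
    proof
      fix x
      assume "x \<in> peirce12 e"
      then have x: "peirce_space True False x"
        by (simp add: peirce_sets)
      then have "x * proj11 t = 0" and "proj22 t * x = 0"
        using mult_peirce11_eq_zero[OF t1] peirce22_mult_peirce12[OF t2]
        unfolding peirce_space_def by simp_all
      with comm[OF x] show "commutator (proj11 t + proj22 t) x = 0"
        unfolding commutator_def by (simp add: distribs_nar)
    qed
  qed
  with diagonal_eq[OF t] show ?thesis
    by simp
qed

lemma diagonal_in_center_peirce21:
  assumes t: "diagonal t" and comm: "\<And>x. peirce_space False True x \<Longrightarrow> x * proj11 t = proj22 t * x"
  shows "t \<in> comm_center"
proof -
  have t1: "peirce_space True True (proj11 t)" and t2: "peirce_space False False (proj22 t)"
    by (simp_all add: peirce_space_proj)
  have "proj11 t + proj22 t \<in> comm_center"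
  proof (rule center_by_peirce21)
    show "proj11 t \<in> peirce11 e" "proj22 t \<in> peirce22 e"
      using t1 t2 by (simp_all add: peirce_sets)
    show "\<forall>x\<in>peirce21 e. commutator (proj11 t + proj22 t) x = 0"
    proof
      fix x
      assume "x \<in> peirce21 e"
      then have x: "peirce_space False True x"
        by (simp add: peirce_sets)
      then have "proj11 t * x = 0" and "x * proj22 t = 0"
        using peirce11_mult_eq_zero[OF t1] peirce21_mult_peirce22[OF x t2]
        unfolding peirce_space_def by simp_all
      with comm[OF x] show "commutator (proj11 t + proj22 t) x = 0"
        unfolding commutator_def by (simp add: distribs_nar)
    qed
  qed
  with diagonal_eq[OF t] show ?thesis
    by simp
qed

end

section \<open>The additivity defect\<close>

text \<open>The last \<open>n - 2\<close> slots of \<open>p\<^sub>n\<close> are filled with \<open>e\<close>, so at least one of them is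
  needed: \<open>n \<ge> 3\<close>.  \<open>parity_sign w\<close> is \<open>(-1)\<^sup>n w\<close>, the sign acquired by elements of
  \<open>R\<^sub>1\<^sub>2\<close> under \<open>n - 2\<close> brackets with \<open>e\<close>.\<close>

locale peirce_lie_derivation = idempotent +
  fixes D :: "'a \<Rightarrow> 'a" and n :: nat
  assumes mult_lie_n_derivation: "mult_lie_n_derivation n D"
    and three_le_n: "3 \<le> n"
begin

definition defect :: "'a \<Rightarrow> 'a \<Rightarrow> 'a" where
  "defect a b = D (a + b) - D a - D b"

definition parity_sign :: "'a \<Rightarrow> 'a" where
  "parity_sign w = (if odd n then - w else w)"

definition comm_tail :: "'a \<Rightarrow> 'a" where
  "comm_tail w = foldl commutator w (replicate (n - 2) e)"

definition lie_e :: "'a \<Rightarrow> 'a \<Rightarrow> 'a" where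
  "lie_e x y = comm_tail (commutator x y)"

lemma parity_sign_simps [simp]:
  "parity_sign (parity_sign x) = x" "parity_sign (- x) = - parity_sign x"
  "parity_sign x = 0 \<longleftrightarrow> x = 0"
  unfolding parity_sign_def by simp_all

lemma parity_sign_diff: "parity_sign (x - y) = parity_sign x - parity_sign y"
  unfolding parity_sign_def by simp

lemma peirce_space_parity_sign: "peirce_space i j x \<Longrightarrow> peirce_space i j (parity_sign x)"
  unfolding parity_sign_def by (simp add: peirce_space_minus)

lemma comm_tail_peirce_space:
  "peirce_space i j w \<Longrightarrow> comm_tail w = (if i = j then 0 else if i then parity_sign w else w)"
  using three_le_n by (simp add: comm_tail_def foldl_commutator_idem parity_sign_def)

lemma comm_tail_add: "comm_tail (a + b) = comm_tail a + comm_tail b"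
  unfolding comm_tail_def by (rule foldl_commutator_add)

lemma comm_tail_diff: "comm_tail (a - b) = comm_tail a - comm_tail b"
  using comm_tail_add[of a "- b"] by (simp add: comm_tail_def foldl_commutator_minus)

lemma comm_tail_eq_proj: "comm_tail x = proj21 x + parity_sign (proj12 x)"
proof -
  have "comm_tail x = comm_tail (proj11 x) + comm_tail (proj12 x) + comm_tail (proj21 x) + comm_tail (proj22 x)"
    by (metis peirce_decomposition comm_tail_add)
  then show ?thesis
    using comm_tail_peirce_space[OF peirce_space_proj(1)] comm_tail_peirce_space[OF peirce_space_proj(2)]
      comm_tail_peirce_space[OF peirce_space_proj(3)] comm_tail_peirce_space[OF peirce_space_proj(4)]
    by simp
qed

lemma comm_tail_mult:
  assumes "peirce_space i j x" and "peirce_space k l y"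
  shows "comm_tail (x * y) = (if (i \<noteq> (j \<noteq> k)) = (j \<noteq> (k \<noteq> l)) then 0
    else if i \<noteq> (j \<noteq> k) then parity_sign (x * y) else x * y)"
  using comm_tail_peirce_space[OF peirce_space_mult[OF assms]] .

lemma lie_e_eq: "lie_e x y = comm_tail (x * y) - comm_tail (y * x)"
  unfolding lie_e_def commutator_def by (rule comm_tail_diff)

lemma lie_e_add_left: "lie_e (a + b) y = lie_e a y + lie_e b y"
  unfolding lie_e_def by (simp add: commutator_add_left comm_tail_add)

lemma lie_e_add_right: "lie_e x (a + b) = lie_e x a + lie_e x b"
  unfolding lie_e_def by (simp add: commutator_add_right comm_tail_add)

lemma lie_e_zero [simp]: "lie_e 0 y = 0" "lie_e x 0 = 0"
  unfolding lie_e_def comm_tail_def by simp_all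

lemma lie_e_central:
  assumes "z \<in> comm_center"
  shows "lie_e z y = 0" "lie_e x z = 0"
proof -
  have "commutator z y = 0" "commutator x z = 0"
    using assms unfolding comm_center_def commutator_def by auto
  then show "lie_e z y = 0" "lie_e x z = 0"
    unfolding lie_e_def comm_tail_def by simp_all
qed

lemma lie_e_idem_right: "lie_e x e = proj21 x - parity_sign (proj12 x)"
  unfolding lie_e_def commutator_idem_right comm_tail_eq_proj
  by (simp add: proj_diff proj_peirce_space[OF peirce_space_proj(3)]
      proj_peirce_space[OF peirce_space_proj(2)] parity_sign_diff)

lemma lie_e_idem_left: "lie_e e x = parity_sign (proj12 x) - proj21 x"
  unfolding lie_e_def commutator_idem_left comm_tail_eq_proj
  by (simp add: proj_diff proj_peirce_space[OF peirce_space_proj(3)]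
      proj_peirce_space[OF peirce_space_proj(2)] parity_sign_diff)

lemma D_lie_e_add_left: "D (lie_e (a + b) y) = D (lie_e a y) + D (lie_e b y) + lie_e (defect a b) y"
  using mult_lie_n_derivation_update_add[OF mult_lie_n_derivation, of "a # y # replicate (n - 2) e" 0]
    three_le_n
  by (simp add: lie_e_def comm_tail_def defect_def)

lemma D_lie_e_add_right: "D (lie_e x (a + b)) = D (lie_e x a) + D (lie_e x b) + lie_e x (defect a b)"
  using mult_lie_n_derivation_update_add[OF mult_lie_n_derivation, of "x # a # replicate (n - 2) e" 1]
    three_le_n
  by (simp add: lie_e_def comm_tail_def defect_def)

lemma D_zero [simp]: "D 0 = 0"
  using D_lie_e_add_left[of 0 0 0] by simp

lemma defect_zero [simp]: "defect 0 b = 0" "defect a 0 = 0"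
  unfolding defect_def by simp_all

lemma defect_commute: "defect a b = defect b a"
  unfolding defect_def by (simp add: add.commute)

lemma lie_e_defect_left: "lie_e (defect a b) y = defect (lie_e a y) (lie_e b y)"
  using D_lie_e_add_left[of a b y] by (simp add: defect_def lie_e_add_left)

lemma lie_e_defect_right: "lie_e x (defect a b) = defect (lie_e x a) (lie_e x b)"
  using D_lie_e_add_right[of x a b] by (simp add: defect_def lie_e_add_right)

lemma D_lie_e_add_add:
  assumes "defect a b \<in> comm_center" and "defect c d \<in> comm_center"
  shows "D (lie_e (a + b) (c + d)) = D (lie_e a c) + D (lie_e a d) + D (lie_e b c) + D (lie_e b d)"
  using D_lie_e_add_left[of a b "c + d"] D_lie_e_add_right[of a c d] D_lie_e_add_right[of b c d]
    lie_e_central[OF assms(1)] lie_e_central[OF assms(2)]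
  by simp

lemma lie_e_idem_right_eq_zero_iff: "lie_e x e = 0 \<longleftrightarrow> diagonal x"
proof -
  have "proj21 (lie_e x e) = proj21 x" and "proj12 (lie_e x e) = - parity_sign (proj12 x)"
    unfolding lie_e_idem_right
    using proj_peirce_space[OF peirce_space_proj(3)]
      proj_peirce_space[OF peirce_space_parity_sign[OF peirce_space_proj(2)]]
    by (simp_all add: proj_diff)
  then show ?thesis
    unfolding diagonal_def by (auto simp: lie_e_idem_right)
qed

lemma lie_e_idem_idem [simp]: "lie_e e e = 0"
  using diagonal_idem by (simp add: lie_e_idem_right_eq_zero_iff)

lemma diagonal_defect: "diagonal a \<Longrightarrow> diagonal (defect a b)"
  using lie_e_defect_left[of a b e] by (simp add: lie_e_idem_right_eq_zero_iff[symmetric])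

lemma lie_e_peirce12_peirce21:
  assumes u: "peirce_space True False u" and v: "peirce_space False True v"
  shows "lie_e u v = 0" "lie_e v u = 0"
  using comm_tail_mult[OF u v] comm_tail_mult[OF v u] by (simp_all add: lie_e_eq)

lemma lie_e_peirce12:
  assumes "peirce_space True False x" and "peirce_space True False y"
  shows "lie_e x y = x * y - y * x"
  using comm_tail_mult[OF assms] comm_tail_mult[OF assms(2,1)] by (simp add: lie_e_eq)

lemma lie_e_peirce21:
  assumes "peirce_space False True x" and "peirce_space False True y"
  shows "lie_e x y = parity_sign (x * y - y * x)"
  using comm_tail_mult[OF assms] comm_tail_mult[OF assms(2,1)] by (simp add: lie_e_eq parity_sign_diff)

lemma lie_e_peirce21_diagonal:
  assumes w: "peirce_space False True w" and "diagonal a"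
  shows "lie_e w a = w * proj11 a - proj22 a * w"
proof -
  have "lie_e w a = lie_e w (proj11 a) + lie_e w (proj22 a)"
    using diagonal_eq[OF \<open>diagonal a\<close>] lie_e_add_right by metis
  then show ?thesis
    using comm_tail_mult[OF w peirce_space_proj(1)] comm_tail_mult[OF peirce_space_proj(1) w]
      comm_tail_mult[OF w peirce_space_proj(4)] comm_tail_mult[OF peirce_space_proj(4) w]
    by (simp add: lie_e_eq)
qed

lemma lie_e_peirce12_diagonal:
  assumes w: "peirce_space True False w" and "diagonal a"
  shows "lie_e w a = parity_sign (w * proj22 a - proj11 a * w)"
proof -
  have "lie_e w a = lie_e w (proj11 a) + lie_e w (proj22 a)"
    using diagonal_eq[OF \<open>diagonal a\<close>] lie_e_add_right by metis
  then show ?thesis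
    using comm_tail_mult[OF w peirce_space_proj(1)] comm_tail_mult[OF peirce_space_proj(1) w]
      comm_tail_mult[OF w peirce_space_proj(4)] comm_tail_mult[OF peirce_space_proj(4) w]
    by (simp add: lie_e_eq parity_sign_diff)
qed

end

locale peirce_lie_derivation_center = peirce_center e + peirce_lie_derivation e D n
  for e :: "'a::alt_ring" and D n
begin

lemma diagonal_in_center_lie_e_peirce12:
  assumes "diagonal t" and "\<And>w. peirce_space True False w \<Longrightarrow> lie_e w t = 0"
  shows "t \<in> comm_center"
  using assms by (intro diagonal_in_center_peirce12) (simp_all add: lie_e_peirce12_diagonal)

lemma diagonal_in_center_lie_e_peirce21:
  assumes "diagonal t" and "\<And>w. peirce_space False True w \<Longrightarrow> lie_e w t = 0"
  shows "t \<in> comm_center"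
  using assms by (intro diagonal_in_center_peirce21) (simp_all add: lie_e_peirce21_diagonal)

lemma defect_diagonal_peirce12:
  assumes d: "diagonal d" and u: "peirce_space True False u"
  shows "defect d u \<in> comm_center"
proof (rule diagonal_in_center_lie_e_peirce21)
  show "diagonal (defect d u)"
    using d by (rule diagonal_defect)
  show "lie_e w (defect d u) = 0" if "peirce_space False True w" for w
    using lie_e_peirce12_peirce21[OF u that] by (simp add: lie_e_defect_right)
qed

lemma defect_diagonal_peirce21:
  assumes d: "diagonal d" and v: "peirce_space False True v"
  shows "defect d v \<in> comm_center"
proof (rule diagonal_in_center_lie_e_peirce12)
  show "diagonal (defect d v)"
    using d by (rule diagonal_defect)
  show "lie_e w (defect d v) = 0" if "peirce_space True False w" for w
    using lie_e_peirce12_peirce21[OF that v] by (simp add: lie_e_defect_right)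
qed

lemma defect_peirce12_peirce21:
  assumes u: "peirce_space True False u" and v: "peirce_space False True v"
  shows "defect u v = 0"
proof -
  have u': "peirce_space True False (parity_sign u)"
    using u by (rule peirce_space_parity_sign)
  have "defect e v \<in> comm_center" and "defect (parity_sign u) e \<in> comm_center"
    using defect_diagonal_peirce21[OF diagonal_idem v] defect_diagonal_peirce12[OF diagonal_idem u']
    by (simp_all add: defect_commute)
  then have "D (lie_e (e + v) (parity_sign u + e))
      = D (lie_e e (parity_sign u)) + D (lie_e e e) + D (lie_e v (parity_sign u)) + D (lie_e v e)"
    by (rule D_lie_e_add_add)
  moreover have "lie_e e (parity_sign u) = u" and "lie_e v e = v"
    using proj_peirce_space[OF u'] proj_peirce_space[OF v]
    by (simp_all add: lie_e_idem_left lie_e_idem_right)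
  moreover have "lie_e v (parity_sign u) = 0"
    using lie_e_peirce12_peirce21(2)[OF u' v] .
  ultimately have "D (u + v) = D u + D v"
    by (simp add: lie_e_add_left lie_e_add_right)
  then show ?thesis
    by (simp add: defect_def)
qed

lemma defect_peirce12:
  assumes u: "peirce_space True False u" and v: "peirce_space True False v"
  shows "defect u v = 0"
proof -
  define x where "x = - parity_sign v"
  define y where "y = parity_sign u"
  have x: "peirce_space True False x" and y: "peirce_space True False y"
    unfolding x_def y_def using u v by (simp_all add: peirce_space_minus peirce_space_parity_sign)
  define r where "r = x * y - y * x"
  have r: "peirce_space False True r"
    unfolding r_def using peirce_space_diff peirce_space_mult[OF x y] peirce_space_mult[OF y x] by simp
  have "defect e x \<in> comm_center" and "defect e y \<in> comm_center"
    using defect_diagonal_peirce12[OF diagonal_idem] x y by simp_all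
  then have "D (lie_e (e + x) (e + y)) = D (lie_e e e) + D (lie_e e y) + D (lie_e x e) + D (lie_e x y)"
    by (rule D_lie_e_add_add)
  moreover have "lie_e e y = u" and "lie_e x e = v" and "lie_e x y = r"
    using proj_peirce_space[OF x] proj_peirce_space[OF y] lie_e_peirce12[OF x y]
    by (simp_all add: lie_e_idem_left lie_e_idem_right x_def y_def r_def)
  ultimately have "D ((u + v) + r) = D u + D v + D r"
    by (simp add: lie_e_add_left lie_e_add_right algebra_simps)
  moreover have "defect (u + v) r = 0"
    using defect_peirce12_peirce21[OF peirce_space_add[OF u v] r] .
  ultimately show ?thesis
    by (simp add: defect_def algebra_simps)
qed

lemma defect_peirce21:
  assumes u: "peirce_space False True u" and v: "peirce_space False True v"
  shows "defect u v = 0"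
proof -
  define y where "y = - v"
  have y: "peirce_space False True y"
    unfolding y_def using v by (rule peirce_space_minus)
  define r where "r = parity_sign (u * y - y * u)"
  have r: "peirce_space True False r"
    unfolding r_def using peirce_space_mult[OF u y] peirce_space_mult[OF y u]
    by (intro peirce_space_parity_sign peirce_space_diff) simp_all
  have "defect e u \<in> comm_center" and "defect e y \<in> comm_center"
    using defect_diagonal_peirce21[OF diagonal_idem] u y by simp_all
  then have "D (lie_e (e + u) (e + y)) = D (lie_e e e) + D (lie_e e y) + D (lie_e u e) + D (lie_e u y)"
    by (rule D_lie_e_add_add)
  moreover have "lie_e e y = v" and "lie_e u e = u" and "lie_e u y = r"
    using proj_peirce_space[OF u] proj_peirce_space[OF y] lie_e_peirce21[OF u y]
    by (simp_all add: lie_e_idem_left lie_e_idem_right y_def r_def)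
  ultimately have "D (r + (u + v)) = D u + D v + D r"
    by (simp add: lie_e_add_left lie_e_add_right algebra_simps)
  moreover have "defect r (u + v) = 0"
    using defect_peirce12_peirce21[OF r peirce_space_add[OF u v]] .
  ultimately show ?thesis
    by (simp add: defect_def algebra_simps)
qed

lemma peirce_space_lie_e_peirce21_diagonal:
  assumes w: "peirce_space False True w" and a: "diagonal a"
  shows "peirce_space False True (lie_e w a)"
  unfolding lie_e_peirce21_diagonal[OF w a]
  using peirce_space_mult[OF w peirce_space_proj(1)] peirce_space_mult[OF peirce_space_proj(4) w]
  by (intro peirce_space_diff) simp_all

lemma defect_diagonal:
  assumes a: "diagonal a" and b: "diagonal b"
  shows "defect a b \<in> comm_center"
proof (rule diagonal_in_center_lie_e_peirce21)
  show "diagonal (defect a b)"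
    using a by (rule diagonal_defect)
  show "lie_e w (defect a b) = 0" if w: "peirce_space False True w" for w
    unfolding lie_e_defect_right
    using peirce_space_lie_e_peirce21_diagonal[OF w a] peirce_space_lie_e_peirce21_diagonal[OF w b]
    by (rule defect_peirce21)
qed

lemma defect_diagonal_offdiagonal:
  assumes a: "diagonal a" and u: "peirce_space True False u" and v: "peirce_space False True v"
  shows "defect a (u + v) \<in> comm_center"
proof (rule diagonal_in_center_lie_e_peirce21)
  show "diagonal (defect a (u + v))"
    using a by (rule diagonal_defect)
  show "lie_e w (defect a (u + v)) = 0" if w: "peirce_space False True w" for w
  proof -
    have "lie_e w (u + v) = parity_sign (w * v - v * w)"
      using lie_e_peirce12_peirce21(2)[OF u w] lie_e_peirce21[OF w v] by (simp add: lie_e_add_right)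
    moreover have "peirce_space True False (parity_sign (w * v - v * w))"
      using peirce_space_mult[OF w v] peirce_space_mult[OF v w]
      by (intro peirce_space_parity_sign peirce_space_diff) simp_all
    ultimately show ?thesis
      unfolding lie_e_defect_right
      using defect_peirce12_peirce21 peirce_space_lie_e_peirce21_diagonal[OF w a] defect_commute
      by metis
  qed
qed

lemma D_minus_sum_D_proj_central:
  "D x - (D (proj11 x) + D (proj12 x) + D (proj21 x) + D (proj22 x)) \<in> comm_center"
proof -
  have "D x - (D (proj11 x) + D (proj12 x) + D (proj21 x) + D (proj22 x))
      = defect (proj11 x + proj22 x) (proj12 x + proj21 x) + defect (proj11 x) (proj22 x)
        + defect (proj12 x) (proj21 x)"
    using peirce_decomposition[of x] by (simp add: defect_def algebra_simps)
  also have "\<dots> \<in> comm_center"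
    using defect_diagonal_offdiagonal[OF diagonal_add[OF diagonal_proj] peirce_space_proj(2,3)]
      defect_diagonal[OF diagonal_proj] defect_peirce12_peirce21[OF peirce_space_proj(2,3)]
    by (simp add: comm_center_add)
  finally show ?thesis .
qed

theorem defect_central: "defect a b \<in> comm_center"
proof -
  define S where "S x = D (proj11 x) + D (proj12 x) + D (proj21 x) + D (proj22 x)" for x
  have "defect a b = (D (a + b) - S (a + b)) - (D a - S a) - (D b - S b)
      + (defect (proj11 a) (proj11 b) + defect (proj22 a) (proj22 b))
      + (defect (proj12 a) (proj12 b) + defect (proj21 a) (proj21 b))"
    by (simp add: S_def defect_def proj_add algebra_simps)
  also have "\<dots> \<in> comm_center"
    using D_minus_sum_D_proj_central defect_diagonal[OF diagonal_proj(1) diagonal_proj(1)]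
      defect_diagonal[OF diagonal_proj(2) diagonal_proj(2)]
      defect_peirce12[OF peirce_space_proj(2) peirce_space_proj(2)]
      defect_peirce21[OF peirce_space_proj(3) peirce_space_proj(3)]
    by (simp add: S_def comm_center_add comm_center_diff)
  finally show ?thesis .
qed

end

theorem theorem2p1:
  fixes e1 :: "'a::alt_ring" and D :: "'a \<Rightarrow> 'a"
  assumes "nontrivial_idempotent e1"
    and "mult_lie_type_derivation D"
    and "\<And>a11 a22. a11 \<in> peirce11 e1 \<Longrightarrow> a22 \<in> peirce22 e1 \<Longrightarrow>
           (\<forall>x\<in>peirce12 e1. commutator (a11 + a22) x = 0) \<Longrightarrow> a11 + a22 \<in> comm_center"
    and "\<And>a11 a22. a11 \<in> peirce11 e1 \<Longrightarrow> a22 \<in> peirce22 e1 \<Longrightarrow>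
           (\<forall>x\<in>peirce21 e1. commutator (a11 + a22) x = 0) \<Longrightarrow> a11 + a22 \<in> comm_center"
  shows "\<forall>a b. D (a + b) - D a - D b \<in> comm_center"
proof -
  obtain m where "3 \<le> m" and "mult_lie_n_derivation m D"
    using assms(2) by (rule mult_lie_type_derivation_ge_3E)
  moreover have "e1 * e1 = e1"
    using assms(1) unfolding nontrivial_idempotent_def by simp
  ultimately interpret peirce_lie_derivation_center e1 D m
    using assms(3,4) by unfold_locales
  show ?thesis
    using defect_central unfolding defect_def by blast
qed

end
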